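(* Let $p$ be a prime with $\gcd(p,6)=1$ and $m\ge 1$. The number $C_R(\mathbb{Z}_{p^m})$ of isomorphism classes of nonsingular reduced Weierstrass elliptic curves over $\mathbb{Z}_{p^m}$ is $$C_R(\mathbb{Z}_{p^m})=\begin{cases}2p^m+6 & p\equiv 1 \pmod{12},\\ 2p^m+2 & p\equiv 5\pmod{12},\\ 2p^m+4 & p\equiv 7\pmod{12},\\ 2p^m & p\equiv 11\pmod{12}.\end{cases}$$
   Context: A reduced Weierstrass curve over $\mathbb{Z}_{n}$ is $y^2=x^3+ax+b$ with $(a,b)\in\mathbb{Z}_{n}^2$; it is nonsingular iff $\Delta=-16(4a^3+27b^2)$ is a unit in $\mathbb{Z}_{n}$. Two such curves with coefficients $(a,b)$ and $(\bar a,\bar b)$ are isomorphic iff there is $u\in\mathbb{Z}_{n}^*$ with $\bar a=u^{-4}a$ and $\bar b=u^{-6}b$ (i.e. related by the change of variables $(x,y)\mapsto(u^2x,u^3y)$). $C_R(\mathbb{Z}_n)$ denotes the number of isomorphism classes of nonsingular reduced curves over $\mathbb{Z}_n$. *)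

theory Defs
  imports "HOL-Number_Theory.Number_Theory"
begin

text \<open>Z_n is modelled by the residues {0..<n} (as int), arithmetic mod n.\<close>

definition units_mod :: "int \<Rightarrow> int set" where
  "units_mod n = {u. 0 \<le> u \<and> u < n \<and> coprime u n}"

text \<open>Reduced Weierstrass curve y^2 = x^3 + a x + b over Z_n, coefficients (a,b).\<close>
definition nonsingular_reduced :: "int \<Rightarrow> int \<times> int \<Rightarrow> bool" where
  "nonsingular_reduced n ab = (case ab of (a, b) \<Rightarrow>
      coprime ((-16 * (4 * a^3 + 27 * b^2)) mod n) n)"

definition reduced_curves :: "int \<Rightarrow> (int \<times> int) set" where
  "reduced_curves n = {(a, b). 0 \<le> a \<and> a < n \<and> 0 \<le> b \<and> b < n \<and> nonsingular_reduced n (a, b)}"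

definition curve_iso :: "int \<Rightarrow> ((int \<times> int) \<times> (int \<times> int)) set" where
  "curve_iso n = {((a, b), (a', b')). (a, b) \<in> reduced_curves n \<and> (a', b') \<in> reduced_curves n \<and>
      (\<exists>u \<in> units_mod n. [a = u^4 * a'] (mod n) \<and> [b = u^6 * b'] (mod n))}"

definition C_R :: "int \<Rightarrow> nat" where
  "C_R n = card (reduced_curves n // curve_iso n)"

end

theory Submission
  imports Defs "HOL-Algebra.Group_Action"
begin

(* The units u of Z/p^m act on coefficient pairs by (a, b) |-> (u^4 a, u^6 b), and the
   isomorphism classes are the orbits, so counting orbit by orbit gives
   C_R * |U| = sum over all curves of the size of the stabiliser.  The stabiliser of (a, b)
   is {u. u^4 = 1} if b = 0, {u. u^6 = 1} if a = 0, and {u. u^2 = 1} otherwise; since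
   U is cyclic of order p^(m-1) (p - 1), these have gcd(4, p - 1), gcd(6, p - 1) and 2
   elements.  There are |U| curves with b = 0, |U| with a = 0, and p^m |U| curves in all,
   because modulo p the singular pairs are exactly the p pairs (-3 t^2, 2 t^3).  Hence
   C_R = 2 p^m + gcd(4, p - 1) + gcd(6, p - 1) - 4, which is the case distinction
   modulo 12. *)

section \<open>Roots of unity modulo odd prime powers\<close>

lemma card_dvd_mult_lessThan:
  fixes N d :: nat
  assumes "N > 0" "d > 0"
  shows "card {i. i < N \<and> N dvd i * d} = gcd d N"
proof -
  define g where "g = gcd d N"
  define q where "q = N div g"
  define e where "e = d div g"
  have g_pos: "g > 0" using assms g_def by simp
  have N_eq: "N = q * g" and d_eq: "d = e * g" using q_def e_def g_def by simp_all
  have "coprime q e" unfolding q_def e_def g_def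
    using div_gcd_coprime[of N d] assms by (simp add: gcd.commute coprime_commute)
  then have dvd_iff: "N dvd i * d \<longleftrightarrow> q dvd i" for i
    using g_pos by (simp add: N_eq d_eq mult.assoc[symmetric] coprime_dvd_mult_left_iff)
  have q_pos: "q > 0" using N_eq assms by simp
  have "{i. i < N \<and> N dvd i * d} = (\<lambda>j. q * j) ` {..<g}"
    unfolding dvd_iff using N_eq q_pos by (auto elim!: dvdE)
  moreover have "inj_on (\<lambda>j. q * j) {..<g}" using q_pos by (auto simp: inj_on_def)
  ultimately show ?thesis using g_def by (simp add: card_image)
qed

lemma card_roots_of_unity_residue_primroot:
  fixes N g d :: nat
  assumes "N > 1" "residue_primroot N g" "d > 0"
  shows "card {k \<in> totatives N. [k ^ d = 1] (mod N)} = gcd d (totient N)"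
proof -
  let ?pow = "\<lambda>i. g ^ i mod N"
  have bij: "bij_betw ?pow {..<totient N} (totatives N)"
    using residue_primroot_is_generator[OF assms(1,2)] .
  have root_iff: "[?pow i ^ d = 1] (mod N) \<longleftrightarrow> totient N dvd i * d" for i
  proof -
    have "[?pow i ^ d = 1] (mod N) \<longleftrightarrow> [g ^ (i * d) = 1] (mod N)"
      by (simp add: cong_def power_mod power_mult)
    also have "\<dots> \<longleftrightarrow> ord N g dvd i * d" by (rule ord_divides)
    finally show ?thesis using assms(2) by (simp add: residue_primroot_def)
  qed
  have "totatives N = ?pow ` {..<totient N}" using bij by (simp add: bij_betw_def)
  then have "{k \<in> totatives N. [k ^ d = 1] (mod N)} = ?pow ` {i. i < totient N \<and> totient N dvd i * d}"
    by (auto simp flip: root_iff)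
  moreover have "inj_on ?pow {i. i < totient N \<and> totient N dvd i * d}"
    using bij unfolding bij_betw_def by (auto intro: inj_on_subset)
  ultimately show ?thesis
    using card_dvd_mult_lessThan[of "totient N" d] assms by (simp add: card_image)
qed

lemma coprime_prime_power_iff:
  fixes p x :: int
  assumes "prime p" "m \<ge> 1"
  shows "coprime x (p ^ m) \<longleftrightarrow> \<not> p dvd x"
  using assms
  by (metis coprime_common_divisor le_imp_power_dvd not_prime_unit power_one_right
      prime_imp_power_coprime_int)

lemma units_mod_eq_totatives:
  fixes N :: nat
  assumes "N > 1"
  shows "units_mod (int N) = int ` totatives N"
proof (intro equalityI subsetI)
  fix u assume u: "u \<in> units_mod (int N)"
  then have "u \<noteq> 0" using assms by (auto simp: units_mod_def)
  with u show "u \<in> int ` totatives N"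
    by (intro image_eqI[of _ _ "nat u"])
       (auto simp: units_mod_def in_totatives_iff coprime_int_iff[symmetric])
next
  fix u assume "u \<in> int ` totatives N"
  then show "u \<in> units_mod (int N)"
    using assms by (auto simp: units_mod_def in_totatives_iff order.order_iff_strict)
qed

lemma card_units_mod_prime_power:
  fixes p :: int
  assumes "prime p" "m \<ge> 1"
  shows "int (card (units_mod (p ^ m))) = p ^ m - p ^ (m - 1)"
proof -
  define P where "P = nat p"
  have p_eq: "p = int P" using prime_gt_0_int[OF assms(1)] by (simp add: P_def)
  have "prime P" using assms(1) p_eq prime_nat_int_transfer by blast
  then have "P ^ m > 1" using assms(2) prime_gt_1_nat[of P] one_less_power[of P m] by simp
  then have "units_mod (p ^ m) = int ` totatives (P ^ m)"
    using units_mod_eq_totatives[of "P ^ m"] by (simp add: p_eq)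
  then have "card (units_mod (p ^ m)) = totient (P ^ m)"
    by (simp add: card_image totient_def)
  also have "\<dots> = P ^ (m - 1) * (P - 1)"
    using \<open>prime P\<close> assms(2) by (simp add: totient_prime_power)
  finally have "int (card (units_mod (p ^ m))) = p ^ (m - 1) * (p - 1)"
    using prime_gt_0_nat[OF \<open>prime P\<close>] by (simp add: p_eq of_nat_diff)
  also have "\<dots> = p ^ m - p ^ (m - 1)"
    using assms(2) by (cases m) (simp_all add: algebra_simps)
  finally show ?thesis .
qed

lemma card_roots_of_unity_prime_power:
  fixes p :: int and d :: nat
  assumes "prime p" "odd p" "m \<ge> 1" "d > 0" "coprime (int d) p"
  shows "int (card {u \<in> units_mod (p ^ m). [u ^ d = 1] (mod p ^ m)}) = gcd (int d) (p - 1)"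
proof -
  define P where "P = nat p"
  have p_eq: "p = int P" using prime_gt_0_int[OF assms(1)] by (simp add: P_def)
  have "prime P" using assms(1) p_eq prime_nat_int_transfer by blast
  have "odd P" "coprime d P" using assms(2,5) p_eq by (simp_all flip: coprime_int_iff)
  obtain g where "\<forall>k>0. residue_primroot (P ^ k) g"
    using residue_primroot_odd_prime_power_exists[OF \<open>prime P\<close> \<open>odd P\<close>] by blast
  then have "residue_primroot (P ^ m) g" using assms(3) by simp
  have "P ^ m > 1" using assms(3) prime_gt_1_nat[OF \<open>prime P\<close>] one_less_power[of P m] by simp
  then have "{u \<in> units_mod (p ^ m). [u ^ d = 1] (mod p ^ m)}
          = int ` {k \<in> totatives (P ^ m). [k ^ d = 1] (mod P ^ m)}"
    using units_mod_eq_totatives[of "P ^ m"] by (auto simp: p_eq simp flip: cong_int_iff)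
  then have "card {u \<in> units_mod (p ^ m). [u ^ d = 1] (mod p ^ m)} = gcd d (totient (P ^ m))"
    using card_roots_of_unity_residue_primroot[OF \<open>P ^ m > 1\<close> \<open>residue_primroot (P ^ m) g\<close> assms(4)]
    by (simp add: card_image)
  also have "\<dots> = gcd d (P ^ (m - 1) * (P - 1))"
    using \<open>prime P\<close> assms(3) by (simp add: totient_prime_power)
  also have "\<dots> = gcd d (P - 1)"
    using \<open>coprime d P\<close> by (intro gcd_mult_right_left_cancel) simp
  finally show ?thesis
    using prime_gt_0_nat[OF \<open>prime P\<close>] by (simp add: p_eq of_nat_diff flip: gcd_int_int_eq)
qed

section \<open>Units acting on Weierstrass coefficients\<close>

definition curve_scale :: "int \<Rightarrow> int \<Rightarrow> int \<times> int \<Rightarrow> int \<times> int" where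
  "curve_scale n u x = ((u ^ 4 * fst x) mod n, (u ^ 6 * snd x) mod n)"

definition curve_automorphisms :: "int \<Rightarrow> int \<times> int \<Rightarrow> int set" where
  "curve_automorphisms n x = {u \<in> units_mod n. curve_scale n u x = x}"

lemma curve_scale_mult:
  "curve_scale n ((u * v) mod n) x = curve_scale n u (curve_scale n v x)"
proof -
  have "((w mod n) ^ k * c) mod n = (w ^ k * c) mod n" for w c :: int and k :: nat
    by (metis mod_mult_left_eq power_mod)
  then show ?thesis
    by (simp add: curve_scale_def mod_mult_right_eq power_mult_distrib mult.assoc)
qed

lemma curve_scale_1:
  "x \<in> reduced_curves n \<Longrightarrow> curve_scale n 1 x = x"
  by (auto simp: curve_scale_def reduced_curves_def)

lemma curve_scale_in_reduced_curves:
  assumes x: "x \<in> reduced_curves n" and u: "coprime u n"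
  shows "curve_scale n u x \<in> reduced_curves n"
proof -
  obtain a b where ab: "x = (a, b)" by (cases x)
  let ?disc = "\<lambda>a b. -16 * (4 * a ^ 3 + 27 * b ^ 2)"
  have "n > 0" using x by (auto simp: reduced_curves_def)
  have "[?disc ((u ^ 4 * a) mod n) ((u ^ 6 * b) mod n) = ?disc (u ^ 4 * a) (u ^ 6 * b)] (mod n)"
    by (intro cong_add cong_mult cong_pow) (simp_all add: cong_def)
  moreover have "?disc (u ^ 4 * a) (u ^ 6 * b) = u ^ 12 * ?disc a b"
    by (simp add: algebra_simps power_mult_distrib flip: power_mult)
  moreover have "coprime (?disc a b) n"
    using x ab \<open>n > 0\<close> by (simp add: reduced_curves_def nonsingular_reduced_def coprime_mod_left_iff)
  ultimately have "coprime (?disc ((u ^ 4 * a) mod n) ((u ^ 6 * b) mod n)) n"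
    using u by (metis cong_imp_coprime cong_sym coprime_mult_left_iff coprime_power_left_iff)
  with \<open>n > 0\<close> show ?thesis
    by (simp add: ab curve_scale_def reduced_curves_def nonsingular_reduced_def coprime_mod_left_iff)
qed

lemma curve_iso_iff:
  "(x, y) \<in> curve_iso n \<longleftrightarrow>
     x \<in> reduced_curves n \<and> y \<in> reduced_curves n \<and> (\<exists>u \<in> units_mod n. x = curve_scale n u y)"
proof -
  have "[fst x = u ^ 4 * fst y] (mod n) \<and> [snd x = u ^ 6 * snd y] (mod n) \<longleftrightarrow> x = curve_scale n u y"
    if "x \<in> reduced_curves n" for u
    using that by (cases x) (auto simp: reduced_curves_def curve_scale_def cong_def)
  then show ?thesis
    by (cases x, cases y) (auto simp: curve_iso_def)
qed

lemma curve_scale_fixed_iff: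
  assumes "x \<in> reduced_curves n"
  shows "curve_scale n u x = x \<longleftrightarrow> [u ^ 4 * fst x = fst x] (mod n) \<and> [u ^ 6 * snd x = snd x] (mod n)"
  using assms by (cases x) (auto simp: curve_scale_def reduced_curves_def cong_def)

lemma units_mod_eq_Units:
  "n > 1 \<Longrightarrow> units_mod n = Units (residue_ring n)"
  by (auto simp: units_mod_def residues.res_units_eq residues_def order.order_iff_strict)

definition curve_action :: "int \<Rightarrow> int \<Rightarrow> int \<times> int \<Rightarrow> int \<times> int" where
  "curve_action n u = (\<lambda>x \<in> reduced_curves n. curve_scale n u x)"

lemma group_action_curve_action:
  assumes "n > 1"
  shows "group_action (units_of (residue_ring n)) (reduced_curves n) (curve_action n)"
proof -
  let ?R = "residue_ring n" and ?E = "reduced_curves n"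
  interpret residues n ?R using assms by (simp add: residues_def)
  have coprime_unit: "coprime u n" if "u \<in> Units ?R" for u
    using that by (simp add: res_units_eq)
  have Bij: "curve_action n u \<in> Bij ?E" if u: "u \<in> Units ?R" for u
  proof -
    let ?v = "inv\<^bsub>?R\<^esub> u"
    have "?v \<in> Units ?R" using u by simp
    have "(?v * u) mod n = 1" "(u * ?v) mod n = 1"
      using Units_l_inv[OF u] Units_r_inv[OF u] by (simp_all only: res_mult_eq res_one_eq)
    have "bij_betw (curve_scale n u) ?E ?E"
    proof (rule bij_betw_byWitness[where f' = "curve_scale n ?v"])
      show "\<forall>x\<in>?E. curve_scale n ?v (curve_scale n u x) = x"
        using \<open>(?v * u) mod n = 1\<close> by (simp add: curve_scale_1 flip: curve_scale_mult)
      show "\<forall>x\<in>?E. curve_scale n u (curve_scale n ?v x) = x"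
        using \<open>(u * ?v) mod n = 1\<close> by (simp add: curve_scale_1 flip: curve_scale_mult)
      show "curve_scale n u ` ?E \<subseteq> ?E"
        using coprime_unit[OF u] by (auto intro: curve_scale_in_reduced_curves)
      show "curve_scale n ?v ` ?E \<subseteq> ?E"
        using coprime_unit[OF \<open>?v \<in> Units ?R\<close>] by (auto intro: curve_scale_in_reduced_curves)
    qed
    then show ?thesis
      by (simp add: Bij_def curve_action_def)
  qed
  show ?thesis
    unfolding group_action_def group_hom_def group_hom_axioms_def
  proof (intro conjI homI)
    show "group (units_of ?R)" by (rule units_group)
    show "group (BijGroup ?E)" by (rule group_BijGroup)
    show "curve_action n u \<in> carrier (BijGroup ?E)" if "u \<in> carrier (units_of ?R)" for u
      using that Bij by (simp add: BijGroup_def units_of_carrier)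
    show "curve_action n (u \<otimes>\<^bsub>units_of ?R\<^esub> v)
            = curve_action n u \<otimes>\<^bsub>BijGroup ?E\<^esub> curve_action n v"
      if "u \<in> carrier (units_of ?R)" "v \<in> carrier (units_of ?R)" for u v
      using that Bij coprime_unit
      by (auto simp: BijGroup_def units_of_carrier units_of_mult res_mult_eq compose_def
          curve_action_def curve_scale_mult curve_scale_in_reduced_curves)
  qed
qed

lemma finite_units_mod: "finite (units_mod n)"
  by (rule finite_subset[of _ "{0..<n}"]) (auto simp: units_mod_def)

lemma finite_reduced_curves: "finite (reduced_curves n)"
  by (rule finite_subset[of _ "{0..<n} \<times> {0..<n}"]) (auto simp: reduced_curves_def)

lemma (in group_action) sum_card_stabilizer:
  assumes "finite (carrier G)" "finite E"
  shows "(\<Sum>x\<in>E. card (stabilizer G \<phi> x)) = card (orbits G E \<phi>) * order G"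
proof -
  have "(\<Sum>x\<in>E. card (stabilizer G \<phi> x))
          = (\<Sum>orb\<in>orbits G E \<phi>. \<Sum>x\<in>orb. card (stabilizer G \<phi> x))"
    by (rule disjoint_sum[OF assms(2), symmetric])
  also have "\<dots> = (\<Sum>orb\<in>orbits G E \<phi>. order G)"
    using card_stablizer_sum[OF assms(1)] by simp
  finally show ?thesis by simp
qed

lemma curve_iso_quotient_eq_orbits:
  assumes "n > 1"
  shows "reduced_curves n // curve_iso n
           = orbits (units_of (residue_ring n)) (reduced_curves n) (curve_action n)"
proof -
  let ?G = "units_of (residue_ring n)" and ?E = "reduced_curves n"
  interpret group_action ?G ?E "curve_action n"
    using group_action_curve_action[OF assms] .
  have "curve_iso n `` {x} = orbit ?G (curve_action n) x" if x: "x \<in> ?E" for x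
  proof (rule Set.set_eqI)
    fix y
    have "y \<in> curve_iso n `` {x} \<longleftrightarrow> y \<in> ?E \<and> x \<in> orbit ?G (curve_action n) y"
      using x assms
      by (auto simp: curve_iso_iff orbit_def curve_action_def units_mod_eq_Units units_of_carrier)
    also have "\<dots> \<longleftrightarrow> y \<in> orbit ?G (curve_action n) x"
    proof
      assume "y \<in> ?E \<and> x \<in> orbit ?G (curve_action n) y"
      then show "y \<in> orbit ?G (curve_action n) x" using orbit_sym x by blast
    next
      assume y: "y \<in> orbit ?G (curve_action n) x"
      then obtain g where "g \<in> carrier ?G" "curve_action n g x = y"
        unfolding orbit_def by blast
      then have "y \<in> ?E" using element_image x by blast
      then show "y \<in> ?E \<and> x \<in> orbit ?G (curve_action n) y" using orbit_sym x y by blast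
    qed
    finally show "y \<in> curve_iso n `` {x} \<longleftrightarrow> y \<in> orbit ?G (curve_action n) x" .
  qed
  then show ?thesis
    by (auto simp: quotient_def orbits_def)
qed

lemma C_R_mult_card_units_mod:
  assumes "n > 1"
  shows "C_R n * card (units_mod n) = (\<Sum>x\<in>reduced_curves n. card (curve_automorphisms n x))"
proof -
  let ?G = "units_of (residue_ring n)" and ?E = "reduced_curves n"
  interpret group_action ?G ?E "curve_action n"
    using group_action_curve_action[OF assms] .
  have carrier_eq: "carrier ?G = units_mod n"
    using assms by (simp add: units_of_carrier units_mod_eq_Units)
  have "stabilizer ?G (curve_action n) x = curve_automorphisms n x" if "x \<in> ?E" for x
    using that by (simp add: stabilizer_def curve_automorphisms_def curve_action_def carrier_eq)
  then have "(\<Sum>x\<in>?E. card (curve_automorphisms n x)) = card (orbits ?G ?E (curve_action n)) * order ?G"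
    using sum_card_stabilizer finite_units_mod finite_reduced_curves carrier_eq by simp
  then show ?thesis
    by (simp add: C_R_def curve_iso_quotient_eq_orbits[OF assms] order_def carrier_eq)
qed

section \<open>Singular coefficient pairs modulo a prime\<close>

lemma cong_of_cong_square_cube:
  fixes p t s :: int
  assumes "prime p" "[t ^ 2 = s ^ 2] (mod p)" "[t ^ 3 = s ^ 3] (mod p)"
  shows "[t = s] (mod p)"
proof -
  have sq: "p dvd t ^ 2 - s ^ 2" and cube: "p dvd t ^ 3 - s ^ 3"
    using assms(2,3) by (simp_all add: cong_iff_dvd_diff)
  show ?thesis
  proof (cases "p dvd t")
    case True
    then have "p dvd t ^ 3" by (simp add: power3_eq_cube)
    from dvd_diff[OF this cube] have "p dvd s ^ 3" by simp
    then have "p dvd s" using assms(1) prime_dvd_power by blast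
    with True show ?thesis by (simp add: cong_iff_dvd_diff)
  next
    case False
    have "t ^ 2 * (t - s) = (t ^ 3 - s ^ 3) - s * (t ^ 2 - s ^ 2)"
      by (simp add: algebra_simps power2_eq_square power3_eq_cube)
    then have "p dvd t ^ 2 * (t - s)" using sq cube by simp
    moreover have "\<not> p dvd t ^ 2" using False assms(1) prime_dvd_power by blast
    ultimately show ?thesis using assms(1) by (simp add: prime_dvd_mult_iff cong_iff_dvd_diff)
  qed
qed

(* x^3 + a x + b = (x - t)^2 (x + 2 t) exactly when (a, b) = (-3 t^2, 2 t^3); for a \<noteq> 0 the
   double root is t = -3 b / (2 a). *)
lemma singular_residue_pair_cusp_form:
  fixes p a b :: int
  assumes p: "prime p" "\<not> p dvd 2" "\<not> p dvd 3"
    and ab: "0 \<le> a" "a < p" "0 \<le> b" "b < p" "p dvd 4 * a ^ 3 + 27 * b ^ 2"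
  obtains t where "0 \<le> t" "t < p" "a = (-3 * t ^ 2) mod p" "b = (2 * t ^ 3) mod p"
proof (cases "a = 0")
  case True
  have "\<not> p dvd 27" using p(3) prime_dvd_power_iff[OF p(1), of 3 3] by simp
  then have "p dvd b ^ 2" using ab(5) True p(1) by (simp add: prime_dvd_mult_iff)
  then have "p dvd b" using p(1) prime_dvd_power by blast
  then have "b = 0" using ab(3,4) zdvd_not_zless by force
  with True show ?thesis using that[of 0] prime_gt_0_int[OF p(1)] by simp
next
  case False
  then have "\<not> p dvd 2 * a" using p ab(1,2) zdvd_not_zless by (auto simp: prime_dvd_mult_iff)
  then obtain i where i: "[2 * a * i = 1] (mod p)"
    using p(1) cong_solve_coprime_int prime_imp_coprime coprime_commute by metis
  then have di: "p dvd 2 * a * i - 1" by (simp add: cong_iff_dvd_diff)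
  define t where "t = -3 * b * i"
  have a_dvd: "p dvd -3 * t ^ 2 - a"
  proof -
    have "-3 * t ^ 2 - a
            = (4 * a ^ 3 + 27 * b ^ 2) * (- (i ^ 2)) + a * (2 * a * i + 1) * (2 * a * i - 1)"
      by (simp add: t_def algebra_simps power2_eq_square power3_eq_cube)
    then show ?thesis using ab(5) di by simp
  qed
  have b_dvd: "p dvd 2 * t ^ 3 - b"
  proof -
    have "2 * t ^ 3 - b = (4 * a ^ 3 + 27 * b ^ 2) * (- 2 * b * i ^ 3)
            + b * (2 * a * i - 1) * ((2 * a * i) ^ 2 + 2 * a * i + 1)"
      by (simp add: t_def algebra_simps power2_eq_square power3_eq_cube)
    then show ?thesis using ab(5) di by simp
  qed
  have "(-3 * t ^ 2) mod p = a" "(2 * t ^ 3) mod p = b"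
    using a_dvd b_dvd ab(1-4) by (simp_all add: mod_eq_dvd_iff[of _ p a, symmetric]
        mod_eq_dvd_iff[of _ p b, symmetric] mod_pos_pos_trivial)
  then have "(-3 * (t mod p) ^ 2) mod p = a" "(2 * (t mod p) ^ 3) mod p = b"
    by (metis mod_mult_right_eq power_mod)+
  then show ?thesis
    using that[of "t mod p"] prime_gt_0_int[OF p(1)] by simp
qed

lemma card_singular_residue_pairs:
  fixes p :: int
  assumes p: "prime p" "\<not> p dvd 2" "\<not> p dvd 3"
  shows "card {(a, b). 0 \<le> a \<and> a < p \<and> 0 \<le> b \<and> b < p \<and> p dvd 4 * a ^ 3 + 27 * b ^ 2} = nat p"
proof -
  let ?S = "{(a, b). 0 \<le> a \<and> a < p \<and> 0 \<le> b \<and> b < p \<and> p dvd 4 * a ^ 3 + 27 * b ^ 2}"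
  let ?cusp = "\<lambda>t. ((-3 * t ^ 2) mod p, (2 * t ^ 3) mod p)"
  have "p > 0" using prime_gt_0_int[OF p(1)] .
  have inj: "inj_on ?cusp {0..<p}"
  proof (rule inj_onI)
    fix t s assume ts: "t \<in> {0..<p}" "s \<in> {0..<p}" and "?cusp t = ?cusp s"
    have "coprime 3 p" "coprime 2 p"
      using prime_imp_coprime[OF p(1) p(3)] prime_imp_coprime[OF p(1) p(2)]
      by (metis coprime_commute)+
    with \<open>?cusp t = ?cusp s\<close> have "[t ^ 2 = s ^ 2] (mod p)" "[t ^ 3 = s ^ 3] (mod p)"
      by (simp_all add: cong_mult_lcancel cong_minus_minus_iff flip: cong_def)
    then have "[t = s] (mod p)" using cong_of_cong_square_cube p(1) by blast
    with ts show "t = s" using cong_less_imp_eq_int by auto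
  qed
  moreover have image: "?cusp ` {0..<p} = ?S"
  proof (intro equalityI subsetI)
    fix x assume "x \<in> ?cusp ` {0..<p}"
    then obtain t where x: "x = ?cusp t" by auto
    have "[4 * ((-3 * t ^ 2) mod p) ^ 3 + 27 * ((2 * t ^ 3) mod p) ^ 2
            = 4 * (-3 * t ^ 2) ^ 3 + 27 * (2 * t ^ 3) ^ 2] (mod p)"
      by (intro cong_add cong_mult cong_pow) (simp_all add: cong_def)
    moreover have "4 * (-3 * t ^ 2) ^ 3 + 27 * (2 * t ^ 3) ^ 2 = 0"
      by (simp add: algebra_simps power2_eq_square power3_eq_cube)
    ultimately show "x \<in> ?S" using x \<open>p > 0\<close> by (simp add: cong_0_iff)
  next
    fix x assume "x \<in> ?S"
    then obtain a b where "x = (a, b)" "0 \<le> a" "a < p" "0 \<le> b" "b < p"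
      "p dvd 4 * a ^ 3 + 27 * b ^ 2" by auto
    with singular_residue_pair_cusp_form[OF p] obtain t
      where "0 \<le> t" "t < p" "x = ?cusp t" by metis
    then show "x \<in> ?cusp ` {0..<p}" by auto
  qed
  ultimately show ?thesis using card_image[OF inj] by simp
qed

lemma card_residue_pair_lift:
  fixes p q :: int
  assumes "p > 0" "q \<ge> 0" and T: "T \<subseteq> {0..<p} \<times> {0..<p}"
  shows "int (card {(a, b). 0 \<le> a \<and> a < p * q \<and> 0 \<le> b \<and> b < p * q \<and> (a mod p, b mod p) \<in> T})
           = int (card T) * q ^ 2"
proof -
  let ?S = "{(a, b). 0 \<le> a \<and> a < p * q \<and> 0 \<le> b \<and> b < p * q \<and> (a mod p, b mod p) \<in> T}"
  let ?digits = "\<lambda>(a, b). ((a mod p, b mod p), (a div p, b div p))"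
  let ?combine = "\<lambda>((r, s), (i, j)). (r + p * i, s + p * j)"
  have range_iff: "0 \<le> a \<and> a < p * q \<longleftrightarrow> a div p \<in> {0..<q}" for a
  proof -
    have a: "a = p * (a div p) + a mod p" "0 \<le> a mod p" "a mod p < p"
      using assms(1) by simp_all
    have "a < p * q \<longleftrightarrow> a div p + 1 \<le> q"
    proof
      assume "a div p + 1 \<le> q"
      then have "p * (a div p + 1) \<le> p * q" using assms(1) by (intro mult_left_mono) auto
      then have "p * (a div p) + p \<le> p * q" by (simp add: algebra_simps)
      with a show "a < p * q" by linarith
    next
      assume "a < p * q"
      show "a div p + 1 \<le> q"
      proof (rule ccontr)
        assume "\<not> a div p + 1 \<le> q"
        then have "p * q \<le> p * (a div p)" using assms(1) by (intro mult_left_mono) auto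
        with a \<open>a < p * q\<close> show False by linarith
      qed
    qed
    moreover have "0 \<le> a div p \<longleftrightarrow> 0 \<le> a" using assms(1) by (rule pos_imp_zdiv_nonneg_iff)
    ultimately show ?thesis by auto
  qed
  have "bij_betw ?digits ?S (T \<times> ({0..<q} \<times> {0..<q}))"
  proof (rule bij_betw_byWitness[where f' = ?combine])
    show "\<forall>x\<in>?S. ?combine (?digits x) = x"
      by (auto simp: mult.commute[of p])
    show "?digits ` ?S \<subseteq> T \<times> ({0..<q} \<times> {0..<q})"
    proof
      fix y assume "y \<in> ?digits ` ?S"
      then obtain a b where "(a, b) \<in> ?S" "y = ?digits (a, b)" by auto
      then show "y \<in> T \<times> ({0..<q} \<times> {0..<q})"
        using range_iff[of a] range_iff[of b] by simp
    qed
    have "?digits (?combine y) = y \<and> ?combine y \<in> ?S" if y_mem: "y \<in> T \<times> ({0..<q} \<times> {0..<q})" for y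
    proof -
      obtain r s i j where y: "y = ((r, s), (i, j))" "(r, s) \<in> T" "i \<in> {0..<q}" "j \<in> {0..<q}"
        using y_mem by force
      then have "0 \<le> r" "r < p" "0 \<le> s" "s < p" using T by auto
      then have digits: "r mod p = r" "(r + p * i) div p = i" "s mod p = s" "(s + p * j) div p = j"
        by simp_all
      show ?thesis
        using y range_iff[of "r + p * i"] range_iff[of "s + p * j"] by (simp add: digits)
    qed
    then show "\<forall>y\<in>T \<times> ({0..<q} \<times> {0..<q}). ?digits (?combine y) = y"
      and "?combine ` (T \<times> ({0..<q} \<times> {0..<q})) \<subseteq> ?S" by auto
  qed
  then have "card ?S = card T * (card {0..<q} * card {0..<q})"
    by (simp add: bij_betw_same_card card_cartesian_product)
  then show ?thesis
    using assms(2) by (simp add: power2_eq_square)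
qed

section \<open>Curves over the integers modulo a prime power\<close>

lemma gcd_diff_mod_of_dvd:
  fixes d k x c :: int
  assumes "d dvd k"
  shows "gcd d (x - c) = gcd d (x mod k - c)"
proof -
  have "[x = x mod k] (mod d)" using assms by (simp add: cong_def mod_mod_cancel)
  then have "[x - c = x mod k - c] (mod d)" using cong_diff cong_refl by blast
  then have "gcd (x - c) d = gcd (x mod k - c) d" by (rule cong_gcd_eq)
  then show ?thesis by (simp add: gcd.commute)
qed

lemma prime_power_dvd_mult_cancel:
  fixes p x y :: int
  assumes "prime p" "p ^ m dvd x * y" "\<not> p dvd y"
  shows "p ^ m dvd x"
  using assms coprime_dvd_mult_left_iff prime_imp_power_coprime_int coprime_commute by metis

lemma prime_power_dvd_left_factor:
  fixes p e c c' x y :: int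
  assumes "prime p" "p ^ m dvd e * c * x" "p ^ m dvd e * c' * y" "\<not> p dvd x" "\<not> p ^ m dvd y"
    and "\<not> (p dvd e \<and> p dvd c)" "\<not> (p dvd c \<and> p dvd c')"
  shows "p ^ m dvd e"
proof -
  have "p ^ m dvd e * c" using prime_power_dvd_mult_cancel assms(1,2,4) .
  show ?thesis
  proof (cases "p dvd c")
    case False
    with \<open>p ^ m dvd e * c\<close> show ?thesis using prime_power_dvd_mult_cancel assms(1) by blast
  next
    case True
    with assms(1,6,7) have "\<not> p dvd e * c'" by (simp add: prime_dvd_mult_iff)
    then have "p ^ m dvd y"
      using prime_power_dvd_mult_cancel[OF assms(1)] assms(3) by (metis mult.commute)
    with assms(5) show ?thesis by contradiction
  qed
qed

locale weierstrass_mod_prime_power =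
  fixes p :: int and m :: nat
  assumes prime: "prime p" and coprime_6: "coprime p 6" and m_ge_1: "m \<ge> 1"
begin

abbreviation n :: int where "n \<equiv> p ^ m"

lemma p_gt_1: "p > 1"
  using prime by (rule prime_gt_1_int)

lemma n_gt_1: "n > 1"
  using p_gt_1 m_ge_1 by (simp add: one_less_power)

lemma coprime_2: "coprime p 2" and coprime_3: "coprime p 3"
  using coprime_6 coprime_mult_right_iff[of p 2 3] by simp_all

lemma odd_p: "odd p"
  using coprime_2 by simp

lemma not_dvd_if_coprime:
  assumes "coprime p k"
  shows "\<not> p dvd k"
proof
  assume "p dvd k"
  with assms have "is_unit p" by (simp add: coprime_absorb_left)
  with prime show False by (simp add: not_prime_unit)
qed

lemma not_dvd_2: "\<not> p dvd 2" and not_dvd_3: "\<not> p dvd 3"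
  using not_dvd_if_coprime coprime_2 coprime_3 by auto

lemma not_dvd_power_2: "\<not> p dvd 2 ^ k"
  using not_dvd_2 prime_dvd_power[OF prime, of 2 k] by blast

lemma not_dvd_power_3: "\<not> p dvd 3 ^ k"
  using not_dvd_3 prime_dvd_power[OF prime, of 3 k] by blast

lemma p_mod_12: "p mod 12 = 1 \<or> p mod 12 = 5 \<or> p mod 12 = 7 \<or> p mod 12 = 11"
proof -
  have "\<not> 3 dvd p" using coprime_3 coprime_absorb_right[of 3 p] by auto
  with odd_p show ?thesis by presburger
qed

lemma nonsingular_reduced_iff:
  "nonsingular_reduced n (a, b) \<longleftrightarrow> \<not> p dvd 4 * a ^ 3 + 27 * b ^ 2"
proof -
  have "\<not> p dvd 16" using not_dvd_power_2[of 4] by simp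
  have "nonsingular_reduced n (a, b) \<longleftrightarrow> coprime (-16 * (4 * a ^ 3 + 27 * b ^ 2)) n"
    unfolding nonsingular_reduced_def prod.case using p_gt_1 by (intro coprime_mod_left_iff) simp
  also have "\<dots> \<longleftrightarrow> \<not> p dvd -16 * (4 * a ^ 3 + 27 * b ^ 2)"
    by (rule coprime_prime_power_iff[OF prime m_ge_1])
  also have "\<dots> \<longleftrightarrow> \<not> (p dvd -16 \<or> p dvd 4 * a ^ 3 + 27 * b ^ 2)"
    by (simp only: prime_dvd_mult_iff[OF prime])
  also have "\<dots> \<longleftrightarrow> \<not> p dvd 4 * a ^ 3 + 27 * b ^ 2"
    using \<open>\<not> p dvd 16\<close> by simp
  finally show ?thesis .
qed

lemma card_reduced_curves: "int (card (reduced_curves n)) = n * (n - p ^ (m - 1))"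
proof -
  define q where "q = p ^ (m - 1)"
  have n_eq: "n = p * q" using m_ge_1 by (cases m) (simp_all add: q_def)
  have "q > 0" using p_gt_1 by (simp add: q_def)
  let ?disc = "\<lambda>a b. 4 * a ^ 3 + 27 * b ^ 2"
  let ?T = "{(a, b). 0 \<le> a \<and> a < p \<and> 0 \<le> b \<and> b < p \<and> p dvd ?disc a b}"
  let ?Box = "{0..<n} \<times> {0..<n}"
  let ?Sing = "{(a, b). 0 \<le> a \<and> a < p * q \<and> 0 \<le> b \<and> b < p * q \<and> (a mod p, b mod p) \<in> ?T}"
  have disc_mod: "p dvd ?disc a b \<longleftrightarrow> p dvd ?disc (a mod p) (b mod p)" for a b
  proof (rule cong_dvd_iff)
    show "[?disc a b = ?disc (a mod p) (b mod p)] (mod p)"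
      by (intro cong_add cong_mult cong_pow) (simp_all add: cong_def)
  qed
  have R: "reduced_curves n = ?Box - ?Sing"
    unfolding reduced_curves_def nonsingular_reduced_iff
    using p_gt_1 by (auto simp: n_eq disc_mod[symmetric])
  have Sing: "?Sing \<subseteq> ?Box" by (auto simp: n_eq)
  have card_Sing: "int (card ?Sing) = p * q ^ 2"
  proof -
    have "?T \<subseteq> {0..<p} \<times> {0..<p}" by auto
    then show ?thesis
      using card_residue_pair_lift[of p q ?T] card_singular_residue_pairs[OF prime not_dvd_2 not_dvd_3]
        p_gt_1 \<open>q > 0\<close> by simp
  qed
  have "card (reduced_curves n) = card ?Box - card ?Sing"
    unfolding R using Sing by (intro card_Diff_subset) (auto intro: finite_subset)
  moreover have "card ?Sing \<le> card ?Box" using Sing by (intro card_mono) auto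
  ultimately have "int (card (reduced_curves n)) = int (card ?Box) - int (card ?Sing)"
    by simp
  also have "\<dots> = n * n - p * q ^ 2" using card_Sing n_gt_1 by simp
  finally show ?thesis by (simp add: n_eq q_def power2_eq_square algebra_simps)
qed

lemma reduced_curve_b0_iff: "(a, 0) \<in> reduced_curves n \<longleftrightarrow> a \<in> units_mod n"
proof -
  have "p dvd 4 * a ^ 3 \<longleftrightarrow> p dvd a"
    using prime not_dvd_power_2[of 2] by (simp add: prime_dvd_mult_iff prime_dvd_power_iff)
  then show ?thesis
    using coprime_prime_power_iff[OF prime m_ge_1, of a]
    by (auto simp: reduced_curves_def units_mod_def nonsingular_reduced_iff)
qed

lemma reduced_curve_a0_iff: "(0, b) \<in> reduced_curves n \<longleftrightarrow> b \<in> units_mod n"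
proof -
  have "p dvd 27 * b ^ 2 \<longleftrightarrow> p dvd b"
    using prime not_dvd_power_3[of 3] by (simp add: prime_dvd_mult_iff prime_dvd_power_iff)
  then show ?thesis
    using coprime_prime_power_iff[OF prime m_ge_1, of b]
    by (auto simp: reduced_curves_def units_mod_def nonsingular_reduced_iff)
qed

lemma card_reduced_curves_b0: "card {x \<in> reduced_curves n. snd x = 0} = card (units_mod n)"
proof -
  have "{x \<in> reduced_curves n. snd x = 0} = (\<lambda>a. (a, 0)) ` units_mod n"
    using reduced_curve_b0_iff by force
  then show ?thesis by (simp add: card_image inj_on_def)
qed

lemma card_reduced_curves_a0: "card {x \<in> reduced_curves n. fst x = 0} = card (units_mod n)"
proof -
  have "{x \<in> reduced_curves n. fst x = 0} = (\<lambda>b. (0, b)) ` units_mod n"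
    using reduced_curve_a0_iff by force
  then show ?thesis by (simp add: card_image inj_on_def)
qed

lemma reduced_curve_not_both_dvd:
  assumes "(a, b) \<in> reduced_curves n"
  shows "\<not> (p dvd a \<and> p dvd b)"
proof
  assume "p dvd a \<and> p dvd b"
  then have "p dvd 4 * a ^ 3 + 27 * b ^ 2" by (simp add: power2_eq_square power3_eq_cube)
  with assms show False by (simp add: reduced_curves_def nonsingular_reduced_iff)
qed

(* d - 1, d + 1 and d^2 + d + 1 are pairwise coprime modulo p, since p does not divide 6. *)
lemma cong_1_if_square_and_cube_fix:
  assumes "[d ^ 2 * a = a] (mod n)" "[d ^ 3 * b = b] (mod n)" "\<not> n dvd a" "\<not> n dvd b"
    and "\<not> (p dvd a \<and> p dvd b)"
  shows "[d = 1] (mod n)"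
proof -
  have "(d - 1) * (d + 1) * a = d ^ 2 * a - a" "(d - 1) * (d ^ 2 + d + 1) * b = d ^ 3 * b - b"
    by (simp_all add: algebra_simps power2_eq_square power3_eq_cube)
  then have fix_a: "n dvd (d - 1) * (d + 1) * a" and fix_b: "n dvd (d - 1) * (d ^ 2 + d + 1) * b"
    using assms(1,2) by (simp_all add: cong_iff_dvd_diff)
  have "\<not> (p dvd d - 1 \<and> p dvd d + 1)"
  proof
    assume "p dvd d - 1 \<and> p dvd d + 1"
    then have "p dvd (d + 1) - (d - 1)" by (blast intro: dvd_diff)
    with not_dvd_2 show False by simp
  qed
  moreover have "\<not> (p dvd d + 1 \<and> p dvd d ^ 2 + d + 1)"
  proof
    assume "p dvd d + 1 \<and> p dvd d ^ 2 + d + 1"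
    then have "p dvd (d ^ 2 + d + 1) - d * (d + 1)" by (blast intro: dvd_diff dvd_mult)
    with p_gt_1 show False by (simp add: algebra_simps power2_eq_square)
  qed
  moreover have "\<not> (p dvd d - 1 \<and> p dvd d ^ 2 + d + 1)"
  proof
    assume "p dvd d - 1 \<and> p dvd d ^ 2 + d + 1"
    then have "p dvd (d ^ 2 + d + 1) - (d - 1) * (d + 2)" by (blast intro: dvd_diff dvd_mult2)
    with not_dvd_3 show False by (simp add: algebra_simps power2_eq_square)
  qed
  ultimately have "n dvd d - 1"
    using assms(3-5) prime_power_dvd_left_factor[OF prime fix_a fix_b]
      prime_power_dvd_left_factor[OF prime fix_b fix_a] by blast
  then show ?thesis by (simp add: cong_iff_dvd_diff)
qed

lemma curve_automorphisms_b0: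
  assumes x: "(a, 0) \<in> reduced_curves n"
  shows "curve_automorphisms n (a, 0) = {u \<in> units_mod n. [u ^ 4 = 1] (mod n)}"
proof -
  have "coprime a n"
    using reduced_curve_not_both_dvd[OF x] coprime_prime_power_iff[OF prime m_ge_1] by simp
  then have "[u ^ 4 * a = a] (mod n) \<longleftrightarrow> [u ^ 4 = 1] (mod n)" for u
    using cong_mult_rcancel[of a n "u ^ 4" 1] by simp
  then show ?thesis using curve_scale_fixed_iff[OF x] by (auto simp: curve_automorphisms_def)
qed

lemma curve_automorphisms_a0:
  assumes x: "(0, b) \<in> reduced_curves n"
  shows "curve_automorphisms n (0, b) = {u \<in> units_mod n. [u ^ 6 = 1] (mod n)}"
proof -
  have "coprime b n"
    using reduced_curve_not_both_dvd[OF x] coprime_prime_power_iff[OF prime m_ge_1] by simp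
  then have "[u ^ 6 * b = b] (mod n) \<longleftrightarrow> [u ^ 6 = 1] (mod n)" for u
    using cong_mult_rcancel[of b n "u ^ 6" 1] by simp
  then show ?thesis using curve_scale_fixed_iff[OF x] by (auto simp: curve_automorphisms_def)
qed

lemma curve_automorphisms_generic:
  assumes x: "(a, b) \<in> reduced_curves n" and "a \<noteq> 0" "b \<noteq> 0"
  shows "curve_automorphisms n (a, b) = {u \<in> units_mod n. [u ^ 2 = 1] (mod n)}"
proof -
  have "\<not> n dvd a" "\<not> n dvd b"
    using x assms(2,3) zdvd_not_zless by (auto simp: reduced_curves_def)
  have "[u ^ 4 * a = a] (mod n) \<and> [u ^ 6 * b = b] (mod n) \<longleftrightarrow> [u ^ 2 = 1] (mod n)" for u
  proof
    assume "[u ^ 4 * a = a] (mod n) \<and> [u ^ 6 * b = b] (mod n)"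
    then have "[(u ^ 2) ^ 2 * a = a] (mod n)" "[(u ^ 2) ^ 3 * b = b] (mod n)"
      by (simp_all flip: power_mult)
    then show "[u ^ 2 = 1] (mod n)"
      using cong_1_if_square_and_cube_fix \<open>\<not> n dvd a\<close> \<open>\<not> n dvd b\<close>
        reduced_curve_not_both_dvd[OF x] by blast
  next
    assume "[u ^ 2 = 1] (mod n)"
    then have "[(u ^ 2) ^ 2 * a = 1 ^ 2 * a] (mod n)" "[(u ^ 2) ^ 3 * b = 1 ^ 3 * b] (mod n)"
      by (intro cong_mult cong_pow cong_refl; assumption)+
    then show "[u ^ 4 * a = a] (mod n) \<and> [u ^ 6 * b = b] (mod n)"
      by (simp flip: power_mult)
  qed
  then show ?thesis using curve_scale_fixed_iff[OF x] by (auto simp: curve_automorphisms_def)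
qed

lemma card_curve_automorphisms:
  assumes x: "x \<in> reduced_curves n"
  shows "int (card (curve_automorphisms n x)) =
    (if snd x = 0 then gcd 4 (p - 1) else if fst x = 0 then gcd 6 (p - 1) else 2)"
proof -
  have roots: "int (card {u \<in> units_mod n. [u ^ d = 1] (mod n)}) = gcd (int d) (p - 1)"
    if "d \<in> {2, 4, 6}" for d
  proof (rule card_roots_of_unity_prime_power[OF prime odd_p m_ge_1])
    have "coprime p (2 * 2)" using coprime_2 by (simp only: coprime_mult_right_iff)
    then have "coprime 4 p" "coprime 6 p" using coprime_6 by (simp_all add: coprime_commute)
    then show "coprime (int d) p" using that odd_p by auto
  qed (use that in auto)
  obtain a b where ab: "x = (a, b)" by (cases x)
  consider "b = 0" | "b \<noteq> 0" "a = 0" | "a \<noteq> 0" "b \<noteq> 0" by blast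
  then show ?thesis
  proof cases
    case 1
    then show ?thesis using x roots[of 4] by (simp add: ab curve_automorphisms_b0)
  next
    case 2
    then show ?thesis using x roots[of 6] by (simp add: ab curve_automorphisms_a0)
  next
    case 3
    have "gcd 2 (p - 1) = 2" using odd_p by simp
    then show ?thesis using 3 x roots[of 2] by (simp add: ab curve_automorphisms_generic)
  qed
qed

lemma C_R_eq: "int (C_R n) = 2 * n + gcd 4 (p - 1) + gcd 6 (p - 1) - 4"
proof -
  let ?R = "reduced_curves n" and ?U = "units_mod n"
  let ?g4 = "gcd 4 (p - 1)" and ?g6 = "gcd 6 (p - 1)"
  have "int (C_R n) * int (card ?U) = (\<Sum>x\<in>?R. int (card (curve_automorphisms n x)))"
    using C_R_mult_card_units_mod[OF n_gt_1] by (metis of_nat_mult of_nat_sum)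
  also have "\<dots> = (\<Sum>x\<in>?R. 2 + (if snd x = 0 then ?g4 - 2 else 0) + (if fst x = 0 then ?g6 - 2 else 0))"
  proof (rule sum.cong)
    fix x assume x: "x \<in> ?R"
    then have "\<not> (fst x = 0 \<and> snd x = 0)"
      using reduced_curve_not_both_dvd[of "fst x" "snd x"] by auto
    then show "int (card (curve_automorphisms n x))
        = 2 + (if snd x = 0 then ?g4 - 2 else 0) + (if fst x = 0 then ?g6 - 2 else 0)"
      using card_curve_automorphisms[OF x] by auto
  qed simp
  also have "\<dots> = 2 * int (card ?R) + (?g4 - 2) * int (card {x \<in> ?R. snd x = 0})
      + (?g6 - 2) * int (card {x \<in> ?R. fst x = 0})"
    by (simp add: sum.distrib finite_reduced_curves flip: sum.inter_filter)
  also have "\<dots> = (2 * n + ?g4 + ?g6 - 4) * int (card ?U)"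
  proof -
    have "int (card ?R) = n * int (card ?U)"
      using card_reduced_curves card_units_mod_prime_power[OF prime m_ge_1] by simp
    then show ?thesis by (simp add: card_reduced_curves_b0 card_reduced_curves_a0 algebra_simps)
  qed
  moreover have "card ?U > 0"
  proof -
    have "1 \<in> ?U" using n_gt_1 by (simp add: units_mod_def)
    then show ?thesis using finite_units_mod card_gt_0_iff by blast
  qed
  ultimately show ?thesis by simp
qed

end

theorem theorem9:
  fixes p :: int and m :: nat
  assumes "prime p" and "coprime p 6" and "m \<ge> 1"
  shows "int (C_R (p ^ m)) =
    (if [p = 1] (mod 12) then 2 * p ^ m + 6
     else if [p = 5] (mod 12) then 2 * p ^ m + 2
     else if [p = 7] (mod 12) then 2 * p ^ m + 4
     else 2 * p ^ m)"
proof -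
  interpret weierstrass_mod_prime_power p m using assms by unfold_locales
  have "gcd 4 (p - 1) = gcd 4 (p mod 12 - 1)" "gcd 6 (p - 1) = gcd 6 (p mod 12 - 1)"
    by (simp_all add: gcd_diff_mod_of_dvd)
  then show ?thesis
    unfolding C_R_eq cong_def using p_mod_12 by (auto simp: gcd_non_0_int)
qed

end
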